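(* Let $d\ge1$. Then (i) $\{\beta(x,z):x\in\mathrm{dS}^d,z\in\Xi_+\}\cap\mathbb R=\{\beta(x,z):x\in\mathrm{dS}^d,z\in\Xi_-\}\cap\mathbb R=(-1,1)$; and (ii) $\mathrm{dS}^d=\partial\Xi_+\cap\partial\Xi_-$ (boundaries taken in $\mathbb C^{1+d}$).
   Context: On $\mathbb C^{1+d}$ let $\beta(z,w)=z_0w_0-z_1w_1-\dots-z_dw_d$ (complex bilinear), $V=\mathbb R^{1+d}$, $V_+=\{x\in V:x_0>0,\beta(x,x)>0\}$, $\mathrm{dS}^d_{\mathbb C}=\{z:\beta(z,z)=-1\}$, $\mathrm{dS}^d=\mathrm{dS}^d_{\mathbb C}\cap V$, and $\Xi_\pm=\mathrm{dS}^d_{\mathbb C}\cap(V\pm iV_+)$. *)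

theory Defs
  imports "HOL-Analysis.Analysis"
begin

text \<open>C^{1+d} is modelled as complex \<times> complex^'m with d = CARD('m) (so d \<ge> 1 automatically);
  the first component is the time coordinate z_0. V = R^{1+d} is real \<times> real^'m.\<close>

definition beta :: "complex \<times> (complex ^ 'm) \<Rightarrow> complex \<times> (complex ^ 'm) \<Rightarrow> complex" where
  "beta z w = fst z * fst w - (\<Sum>i\<in>UNIV. snd z $ i * snd w $ i)"

definition betaR :: "real \<times> (real ^ 'm) \<Rightarrow> real \<times> (real ^ 'm) \<Rightarrow> real" where
  "betaR x y = fst x * fst y - (\<Sum>i\<in>UNIV. snd x $ i * snd y $ i)"

definition cmk :: "real \<times> (real ^ 'm) \<Rightarrow> real \<times> (real ^ 'm) \<Rightarrow> complex \<times> (complex ^ 'm)" where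
  "cmk a b = (Complex (fst a) (fst b), \<chi> i. Complex (snd a $ i) (snd b $ i))"

definition Vreal :: "(complex \<times> (complex ^ 'm)) set" where
  "Vreal = {cmk a 0 | a. True}"

definition Vplus :: "(real \<times> (real ^ 'm)) set" where
  "Vplus = {x. fst x > 0 \<and> betaR x x > 0}"

definition dSC :: "(complex \<times> (complex ^ 'm)) set" where
  "dSC = {z. beta z z = -1}"

definition dS :: "(complex \<times> (complex ^ 'm)) set" where
  "dS = dSC \<inter> Vreal"

definition XiPlus :: "(complex \<times> (complex ^ 'm)) set" where
  "XiPlus = dSC \<inter> {cmk a b | a b. b \<in> Vplus}"

definition XiMinus :: "(complex \<times> (complex ^ 'm)) set" where
  "XiMinus = dSC \<inter> {cmk a (- b) | a b. b \<in> Vplus}"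

end

theory Submission
  imports Defs
begin

text \<open>Write a point of \<open>\<complex>\<^sup>1\<^sup>+\<^sup>d\<close> as \<open>z = a + i b\<close> with \<open>a, b\<close> real. Then \<open>z \<in> dS\<^sub>\<complex>\<close> iff
  \<open>\<beta>(a,a) = \<beta>(b,b) - 1\<close> and \<open>\<beta>(a,b) = 0\<close>, and \<open>z \<in> \<Xi>\<^sub>+\<close> iff moreover \<open>b \<in> V\<^sub>+\<close>.
  For real \<open>x \<in> dS\<close> the value \<open>\<beta>(x,z) = \<beta>(x,a) + i \<beta>(x,b)\<close> is real iff \<open>x \<perp> b\<close>; then
  \<open>x + \<beta>(x,a) a\<close> is orthogonal to the timelike vector \<open>b\<close>, hence spacelike or null, and expanding
  its Minkowski square gives \<open>\<beta>(x,a)\<^sup>2 (1 + \<beta>(b,b)) \<le> 1\<close>, so \<open>|\<beta>(x,a)| < 1\<close>. Every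
  \<open>r \<in> (-1,1)\<close> is attained by \<open>x = e\<^sub>1\<close>, \<open>z = -r e\<^sub>1 + i \<surd>(1 - r\<^sup>2) e\<^sub>0\<close>.

  A point of \<open>dS\<close> is not in \<open>\<Xi>\<^sub>+\<close> but is the limit of \<open>\<surd>(1 - t\<^sup>2) x + i t u \<in> \<Xi>\<^sub>+\<close> for a unit
  future vector \<open>u \<perp> x\<close>. Conversely the closure of \<open>\<Xi>\<^sub>+\<close> has imaginary parts in the closed future
  cone, so a common boundary point of \<open>\<Xi>\<^sub>+\<close> and \<open>\<Xi>\<^sub>-\<close> has imaginary part in both the closed
  future and the closed past cone, i.e.\ it is real. Everything transfers from \<open>\<Xi>\<^sub>+\<close> to \<open>\<Xi>\<^sub>-\<close>
  because complex conjugation maps \<open>\<Xi>\<^sub>+\<close> onto \<open>\<Xi>\<^sub>-\<close>, fixes \<open>dS\<close>, and conjugates \<open>\<beta>\<close>.\<close>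

lemma betaR_inner: "betaR x y = fst x * fst y - inner (snd x) (snd y)"
  by (simp add: betaR_def inner_vec_def)

lemma betaR_commute: "betaR x y = betaR y x"
  by (simp add: betaR_inner inner_commute mult.commute)

lemma betaR_add [simp]:
  "betaR (x + y) w = betaR x w + betaR y w" "betaR w (x + y) = betaR w x + betaR w y"
  by (simp_all add: betaR_inner inner_add_left inner_add_right algebra_simps)

lemma betaR_scaleR [simp]:
  "betaR (c *\<^sub>R x) y = c * betaR x y" "betaR y (c *\<^sub>R x) = c * betaR y x"
  by (simp_all add: betaR_inner algebra_simps)

lemma betaR_minus [simp]: "betaR (- x) y = - betaR x y" "betaR y (- x) = - betaR y x"
  by (simp_all add: betaR_inner)

lemma betaR_zero [simp]: "betaR 0 y = 0" "betaR y 0 = 0"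
  by (simp_all add: betaR_inner)

lemma beta_cmk:
  "beta (cmk a b) (cmk c d) = Complex (betaR a c - betaR b d) (betaR a d + betaR b c)"
  by (simp add: beta_def cmk_def betaR_def complex_eq_iff Re_sum Im_sum sum_subtractf sum.distrib
      algebra_simps)

lemma betaR_self_nonpos_if_orthogonal_timelike:
  assumes "betaR v b = 0" "betaR b b > 0"
  shows "betaR v v \<le> 0"
proof -
  let ?s = "inner (snd b) (snd v)"
  have s: "?s = fst b * fst v"
    using assms(1) by (simp add: betaR_inner inner_commute mult.commute)
  have b: "inner (snd b) (snd b) < (fst b)\<^sup>2"
    using assms(2) by (simp add: betaR_inner power2_eq_square)
  have "(fst v)\<^sup>2 \<le> inner (snd v) (snd v)"
  proof (rule ccontr)
    assume "\<not> ?thesis"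
    then have v: "inner (snd v) (snd v) < (fst v)\<^sup>2"
      by simp
    then have "(fst v)\<^sup>2 > 0"
      by (smt (verit) inner_ge_zero)
    have "?s\<^sup>2 \<le> inner (snd b) (snd b) * inner (snd v) (snd v)"
      by (rule Cauchy_Schwarz_ineq)
    also have "\<dots> \<le> inner (snd b) (snd b) * (fst v)\<^sup>2"
      using v by (simp add: mult_left_mono)
    also have "\<dots> < (fst b)\<^sup>2 * (fst v)\<^sup>2"
      using b \<open>(fst v)\<^sup>2 > 0\<close> by simp
    finally show False
      by (simp add: s power_mult_distrib)
  qed
  then show ?thesis
    by (simp add: betaR_inner power2_eq_square)
qed

lemma abs_betaR_lt_1:
  assumes "betaR x x = -1" "betaR x b = 0" "betaR a b = 0" "betaR a a = betaR b b - 1"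
    and "betaR b b > 0"
  shows "\<bar>betaR x a\<bar> < 1"
proof -
  define c where "c = betaR x a"
  have "betaR (x + c *\<^sub>R a) (x + c *\<^sub>R a) = c\<^sup>2 * (1 + betaR b b) - 1"
    by (simp add: c_def assms(1,4) betaR_commute[of a x] algebra_simps power2_eq_square)
  moreover have "betaR (x + c *\<^sub>R a) b = 0"
    using assms(2,3) by simp
  then have "betaR (x + c *\<^sub>R a) (x + c *\<^sub>R a) \<le> 0"
    using assms(5) by (rule betaR_self_nonpos_if_orthogonal_timelike)
  ultimately have "c\<^sup>2 * (1 + betaR b b) \<le> 1"
    by linarith
  then have "c\<^sup>2 < 1"
    using assms(5) by (smt (verit) less_1_mult mult_cancel_right2)
  then show ?thesis
    by (simp add: c_def abs_square_less_1)
qed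

lemma exists_future_unit_orthogonal:
  assumes "betaR y y = -1"
  obtains u where "fst u > 0" "betaR u u = 1" "betaR u y = 0"
proof
  define n where "n = norm (snd y)"
  have nn: "inner (snd y) (snd y) = n\<^sup>2"
    by (simp add: n_def power2_norm_eq_inner)
  have n2: "n\<^sup>2 = 1 + (fst y)\<^sup>2"
    using assms nn by (simp add: betaR_inner power2_eq_square)
  then have "n > 0"
    by (metis n_def add_pos_nonneg norm_ge_zero order_less_le power_zero_numeral zero_less_one
        zero_le_power2)
  define u where "u = (n, (fst y / n) *\<^sub>R snd y)"
  show "fst u > 0"
    using \<open>n > 0\<close> by (simp add: u_def)
  show "betaR u y = 0"
    using \<open>n > 0\<close> nn by (simp add: u_def betaR_inner power2_eq_square)
  have "betaR u u = n\<^sup>2 - (fst y)\<^sup>2"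
    using \<open>n > 0\<close> by (simp add: u_def betaR_inner nn power_divide power2_eq_square)
  then show "betaR u u = 1"
    using n2 by simp
qed

definition re_part :: "complex \<times> (complex ^ 'm) \<Rightarrow> real \<times> (real ^ 'm)" where
  "re_part z = (Re (fst z), \<chi> i. Re (snd z $ i))"

definition im_part :: "complex \<times> (complex ^ 'm) \<Rightarrow> real \<times> (real ^ 'm)" where
  "im_part z = (Im (fst z), \<chi> i. Im (snd z $ i))"

lemma cmk_re_im_part: "cmk (re_part z) (im_part z) = z"
  by (simp add: cmk_def re_part_def im_part_def prod_eq_iff vec_eq_iff complex_eq_iff)

lemma re_part_cmk [simp]: "re_part (cmk a b) = a" and im_part_cmk [simp]: "im_part (cmk a b) = b"
  by (simp_all add: cmk_def re_part_def im_part_def prod_eq_iff vec_eq_iff)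

lemma cmk_eq_iff: "z = cmk a b \<longleftrightarrow> a = re_part z \<and> b = im_part z"
  by (metis cmk_re_im_part re_part_cmk im_part_cmk)

lemma isCont_im_part: "isCont im_part z"
proof -
  have "continuous_on UNIV im_part"
    unfolding im_part_def by (intro continuous_intros)
  then show ?thesis
    by (metis continuous_on_eq_continuous_at open_UNIV UNIV_I)
qed

lemma tendsto_cmk:
  assumes "(A \<longlongrightarrow> a) F" "(B \<longlongrightarrow> b) F"
  shows "((\<lambda>n. cmk (A n) (B n)) \<longlongrightarrow> cmk a b) F"
  unfolding cmk_def Complex_eq
  by (intro tendsto_Pair vec_tendstoI) (auto intro!: tendsto_intros assms)

lemma cmk_in_dSC_iff: "cmk a b \<in> dSC \<longleftrightarrow> betaR a a = betaR b b - 1 \<and> betaR a b = 0"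
  by (auto simp: dSC_def beta_cmk Complex_eq_neg_1 betaR_commute[of b a])

lemma mem_dS_iff: "z \<in> dS \<longleftrightarrow> z \<in> dSC \<and> im_part z = 0"
  by (auto simp: dS_def Vreal_def cmk_eq_iff)

lemma cmk_in_dS_iff: "cmk y 0 \<in> dS \<longleftrightarrow> betaR y y = -1"
  by (simp add: mem_dS_iff cmk_in_dSC_iff)

lemma dSE:
  assumes "x \<in> dS"
  obtains y where "x = cmk y 0" "betaR y y = -1"
  using assms by (metis cmk_in_dS_iff cmk_re_im_part mem_dS_iff)

lemma mem_XiPlus_iff: "z \<in> XiPlus \<longleftrightarrow> z \<in> dSC \<and> im_part z \<in> Vplus"
  by (auto simp: XiPlus_def cmk_eq_iff)

lemma mem_XiMinus_iff: "z \<in> XiMinus \<longleftrightarrow> z \<in> dSC \<and> - im_part z \<in> Vplus"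
  unfolding XiMinus_def Int_iff mem_Collect_eq cmk_eq_iff by (metis minus_minus)

lemma cmk_in_XiPlus:
  assumes "betaR y y = -1" "fst u > 0" "betaR u u = 1" "betaR u y = 0"
    and "c\<^sup>2 + t\<^sup>2 = 1" "t > 0"
  shows "cmk (c *\<^sub>R y) (t *\<^sub>R u) \<in> XiPlus"
proof -
  have "t *\<^sub>R u \<in> Vplus"
    using assms by (simp add: Vplus_def)
  moreover have "cmk (c *\<^sub>R y) (t *\<^sub>R u) \<in> dSC"
    using assms by (simp add: cmk_in_dSC_iff betaR_commute[of y u] algebra_simps power2_eq_square)
  ultimately show ?thesis
    by (simp add: mem_XiPlus_iff)
qed

lemma real_beta_values_dS_XiPlus:
  "{beta x z | x z. x \<in> (dS :: (complex \<times> (complex ^ 'm)) set) \<and> z \<in> XiPlus} \<inter> range complex_of_real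
    = complex_of_real ` {-1<..<1}" (is "?values \<inter> _ = _")
proof (intro equalityI subsetI)
  fix w assume "w \<in> ?values \<inter> range complex_of_real"
  then obtain x z :: "complex \<times> (complex ^ 'm)"
    where w: "w = beta x z" and "x \<in> dS" "z \<in> XiPlus" "w \<in> \<real>"
    unfolding Reals_def by blast
  obtain y where x: "x = cmk y 0" "betaR y y = -1"
    using \<open>x \<in> dS\<close> by (rule dSE)
  define a where "a = re_part z"
  define b where "b = im_part z"
  have z: "z = cmk a b" "cmk a b \<in> dSC" "b \<in> Vplus"
    using \<open>z \<in> XiPlus\<close> by (auto simp: a_def b_def mem_XiPlus_iff cmk_re_im_part)
  have "w = Complex (betaR y a) (betaR y b)"
    using w x z by (simp add: beta_cmk)
  with \<open>w \<in> \<real>\<close> have "betaR y b = 0" "w = complex_of_real (betaR y a)"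
    by (simp_all add: complex_is_Real_iff complex_eq_iff)
  moreover have "\<bar>betaR y a\<bar> < 1"
    using x z \<open>betaR y b = 0\<close>
    by (intro abs_betaR_lt_1) (auto simp: cmk_in_dSC_iff Vplus_def)
  ultimately show "w \<in> complex_of_real ` {-1<..<1}"
    by (auto simp: abs_less_iff)
next
  fix w assume "w \<in> complex_of_real ` {-1<..<1}"
  then obtain r where w: "w = complex_of_real r" and "\<bar>r\<bar> < 1"
    by auto
  obtain i :: 'm where True by blast
  define y :: "real \<times> (real ^ 'm)" where "y = (0, axis i 1)"
  define u :: "real \<times> (real ^ 'm)" where "u = (1, 0)"
  have y: "betaR y y = -1" and u: "fst u > 0" "betaR u u = 1" "betaR u y = 0"
    by (simp_all add: y_def u_def betaR_inner)
  have "r\<^sup>2 < 1"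
    using \<open>\<bar>r\<bar> < 1\<close> by (simp add: abs_square_less_1)
  then have "(- r)\<^sup>2 + (sqrt (1 - r\<^sup>2))\<^sup>2 = 1" "sqrt (1 - r\<^sup>2) > 0"
    by simp_all
  then have "cmk ((- r) *\<^sub>R y) (sqrt (1 - r\<^sup>2) *\<^sub>R u) \<in> XiPlus"
    using y u by (intro cmk_in_XiPlus)
  moreover have "cmk y 0 \<in> dS"
    using y by (simp add: cmk_in_dS_iff)
  moreover have "beta (cmk y 0) (cmk ((- r) *\<^sub>R y) (sqrt (1 - r\<^sup>2) *\<^sub>R u)) = w"
    using y u by (simp add: w beta_cmk betaR_commute[of y u] complex_eq_iff)
  ultimately show "w \<in> ?values \<inter> range complex_of_real"
    using w by blast
qed

lemma image_involution_eq_vimage: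
  assumes "\<And>x. f (f x) = x"
  shows "f ` S = f -` S"
proof (intro equalityI subsetI)
  fix x assume "x \<in> f -` S"
  then have "f (f x) \<in> f ` S"
    by blast
  then show "x \<in> f ` S"
    by (simp add: assms)
qed (auto simp: assms)

lemma image_cnj_Int_reals: "cnj ` B \<inter> range complex_of_real = B \<inter> range complex_of_real"
  by (auto simp: image_involution_eq_vimage[OF complex_cnj_cnj])

definition cnj_point :: "complex \<times> (complex ^ 'm) \<Rightarrow> complex \<times> (complex ^ 'm)" where
  "cnj_point z = (cnj (fst z), \<chi> i. cnj (snd z $ i))"

lemma cnj_point_cmk [simp]: "cnj_point (cmk a b) = cmk a (- b)"
  by (simp add: cnj_point_def cmk_def vec_eq_iff complex_eq_iff)

lemma cnj_point_involution [simp]: "cnj_point (cnj_point z) = z"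
  by (simp add: cnj_point_def vec_eq_iff)

lemma im_part_cnj_point [simp]: "im_part (cnj_point z) = - im_part z"
  by (metis cmk_re_im_part cnj_point_cmk im_part_cmk)

lemma inj_cnj_point: "inj cnj_point"
  by (metis cnj_point_involution injI)

lemma linear_cnj_point: "linear cnj_point"
  by (rule linearI) (simp_all add: cnj_point_def vec_eq_iff complex_cnj_scaleR)

lemma beta_cnj_point: "beta (cnj_point z) (cnj_point w) = cnj (beta z w)"
  by (simp add: beta_def cnj_point_def)

lemma cnj_point_in_dSC_iff: "cnj_point z \<in> dSC \<longleftrightarrow> z \<in> dSC"
  unfolding dSC_def mem_Collect_eq beta_cnj_point by (metis complex_cnj_cnj complex_cnj_minus complex_cnj_one)

lemma cnj_point_dS: "z \<in> dS \<Longrightarrow> cnj_point z = z"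
  by (metis cmk_re_im_part cnj_point_cmk mem_dS_iff minus_zero)

lemma XiMinus_eq_image_cnj_point: "XiMinus = cnj_point ` XiPlus"
proof -
  have "z \<in> XiMinus \<longleftrightarrow> cnj_point z \<in> XiPlus" for z :: "complex \<times> (complex ^ 'm)"
    by (simp add: mem_XiMinus_iff mem_XiPlus_iff cnj_point_in_dSC_iff)
  then have "XiMinus = cnj_point -` XiPlus"
    by blast
  then show ?thesis
    by (simp add: image_involution_eq_vimage[OF cnj_point_involution])
qed

lemma beta_values_dS_XiMinus:
  "{beta x z | x z. x \<in> (dS :: (complex \<times> (complex ^ 'm)) set) \<and> z \<in> XiMinus}
    = cnj ` {beta x z | x z. x \<in> (dS :: (complex \<times> (complex ^ 'm)) set) \<and> z \<in> XiPlus}"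
    (is "?minus = cnj ` ?plus")
proof -
  have beta_cnj: "beta x (cnj_point z) = cnj (beta x z)" if "x \<in> dS"
    for x z :: "complex \<times> (complex ^ 'm)"
    using that by (metis beta_cnj_point cnj_point_dS)
  show ?thesis
  proof (intro equalityI subsetI)
    fix w assume "w \<in> ?minus"
    then obtain x z :: "complex \<times> (complex ^ 'm)"
      where "w = beta x (cnj_point z)" "x \<in> dS" "z \<in> XiPlus"
      unfolding XiMinus_eq_image_cnj_point by blast
    then show "w \<in> cnj ` ?plus"
      using beta_cnj by blast
  next
    fix w assume "w \<in> cnj ` ?plus"
    then obtain x z :: "complex \<times> (complex ^ 'm)"
      where "w = cnj (beta x z)" "x \<in> dS" "z \<in> XiPlus"
      by blast
    then have "w = beta x (cnj_point z)" "cnj_point z \<in> XiMinus"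
      by (simp_all add: beta_cnj XiMinus_eq_image_cnj_point)
    then show "w \<in> ?minus"
      using \<open>x \<in> dS\<close> by blast
  qed
qed

lemma real_beta_values_dS_XiMinus:
  "{beta x z | x z. x \<in> (dS :: (complex \<times> (complex ^ 'm)) set) \<and> z \<in> XiMinus} \<inter> range complex_of_real
    = complex_of_real ` {-1<..<1}"
  by (simp only: beta_values_dS_XiMinus image_cnj_Int_reals real_beta_values_dS_XiPlus)

definition closed_future_cone :: "(real \<times> (real ^ 'm)) set" where
  "closed_future_cone = {x. 0 \<le> fst x \<and> 0 \<le> betaR x x}"

lemma closed_closed_future_cone: "closed closed_future_cone"
  unfolding closed_future_cone_def betaR_inner
  by (intro closed_Collect_conj closed_Collect_le continuous_intros)

lemma Vplus_subset_closed_future_cone: "Vplus \<subseteq> closed_future_cone"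
  by (auto simp: Vplus_def closed_future_cone_def)

lemma closed_future_cone_antisym:
  assumes "x \<in> closed_future_cone" "- x \<in> closed_future_cone"
  shows "x = 0"
proof -
  have "fst x = 0" "inner (snd x) (snd x) \<le> 0"
    using assms by (auto simp: closed_future_cone_def betaR_inner)
  then show ?thesis
    by (metis inner_eq_zero_iff inner_ge_zero order_antisym prod_eq_iff fst_zero snd_zero)
qed

lemma closed_dSC: "closed dSC"
  unfolding dSC_def beta_def by (intro closed_Collect_eq continuous_intros)

lemma closure_XiPlus_subset: "closure XiPlus \<subseteq> dSC \<inter> im_part -` closed_future_cone"
proof (rule closure_minimal)
  show "XiPlus \<subseteq> dSC \<inter> im_part -` closed_future_cone"
    using Vplus_subset_closed_future_cone by (auto simp: mem_XiPlus_iff)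
  show "closed (dSC \<inter> im_part -` closed_future_cone)"
    using closed_dSC closed_closed_future_cone isCont_im_part
    by (intro closed_Int continuous_closed_vimage)
qed

lemma frontier_XiMinus: "frontier XiMinus = cnj_point ` frontier XiPlus"
  unfolding XiMinus_eq_image_cnj_point frontier_def
  by (simp add: closure_injective_linear_image[OF linear_cnj_point inj_cnj_point, symmetric]
      interior_injective_linear_image[OF linear_cnj_point inj_cnj_point] image_set_diff[OF inj_cnj_point])

lemma frontier_XiPlus_Int_frontier_XiMinus_subset: "frontier XiPlus \<inter> frontier XiMinus \<subseteq> dS"
proof
  fix z assume "z \<in> frontier XiPlus \<inter> frontier XiMinus"
  then have "z \<in> frontier XiPlus" "cnj_point z \<in> frontier XiPlus"
    unfolding frontier_XiMinus image_involution_eq_vimage[OF cnj_point_involution] by simp_all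
  then have "z \<in> closure XiPlus" "cnj_point z \<in> closure XiPlus"
    by (simp_all add: frontier_def)
  then have "z \<in> dSC" "im_part z \<in> closed_future_cone" "- im_part z \<in> closed_future_cone"
    using closure_XiPlus_subset by auto
  then show "z \<in> dS"
    by (simp add: mem_dS_iff closed_future_cone_antisym)
qed

lemma dS_subset_frontier_XiPlus: "dS \<subseteq> frontier XiPlus"
proof
  fix x :: "complex \<times> (complex ^ 'm)" assume "x \<in> dS"
  then obtain y where x: "x = cmk y 0" "betaR y y = -1"
    by (rule dSE)
  obtain u where u: "fst u > 0" "betaR u u = 1" "betaR u y = 0"
    using exists_future_unit_orthogonal[OF \<open>betaR y y = -1\<close>] by blast
  define \<gamma> where "\<gamma> t = cmk (sqrt (1 - t\<^sup>2) *\<^sub>R y) (t *\<^sub>R u)" for t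
  have "(\<gamma> \<longlongrightarrow> cmk (sqrt (1 - 0\<^sup>2) *\<^sub>R y) (0 *\<^sub>R u)) (at_right 0)"
    unfolding \<gamma>_def by (intro tendsto_cmk tendsto_intros)
  then have "(\<gamma> \<longlongrightarrow> x) (at_right 0)"
    by (simp add: x)
  moreover have "\<gamma> t \<in> XiPlus" if "0 < t" "t < 1" for t
  proof -
    have "t\<^sup>2 < 1"
      using that by (simp add: abs_square_less_1)
    then show ?thesis
      unfolding \<gamma>_def using x u that by (intro cmk_in_XiPlus) simp_all
  qed
  then have "eventually (\<lambda>t. \<gamma> t \<in> closure XiPlus) (at_right 0)"
    using closure_subset by (force simp: eventually_at_right_field intro!: exI[of _ 1])
  ultimately have "x \<in> closure XiPlus"
    by (intro Lim_in_closed_set[of _ \<gamma>]) auto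
  moreover have "x \<notin> interior XiPlus"
    using interior_subset x by (force simp: mem_XiPlus_iff Vplus_def)
  ultimately show "x \<in> frontier XiPlus"
    by (simp add: frontier_def)
qed

lemma dS_eq_frontier_XiPlus_Int_frontier_XiMinus: "dS = frontier XiPlus \<inter> frontier XiMinus"
proof -
  have "dS \<subseteq> frontier XiMinus"
    unfolding frontier_XiMinus using dS_subset_frontier_XiPlus cnj_point_dS
    by (metis image_eqI subsetD subsetI)
  then show ?thesis
    using dS_subset_frontier_XiPlus frontier_XiPlus_Int_frontier_XiMinus_subset by blast
qed

theorem mainTheorem20:
  shows "({beta x z | x z. x \<in> (dS :: (complex \<times> (complex ^ 'm)) set) \<and> z \<in> XiPlus} \<inter> range complex_of_real
           = complex_of_real ` {-1<..<1}
        \<and> {beta x z | x z. x \<in> (dS :: (complex \<times> (complex ^ 'm)) set) \<and> z \<in> XiMinus} \<inter> range complex_of_real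
           = complex_of_real ` {-1<..<1})
      \<and> (dS :: (complex \<times> (complex ^ 'm)) set) = frontier XiPlus \<inter> frontier XiMinus"
  using real_beta_values_dS_XiPlus real_beta_values_dS_XiMinus
    dS_eq_frontier_XiPlus_Int_frontier_XiMinus
  by blast

end
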